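(* Let $G\leq \mathrm{Aut}(X^* )$ be finitely generated and just infinite, strongly self-replicating, and with the congruence subgroup property. Let $Y$ be a spanning leaf set and $L\le G$. If $\mathrm{st}_L(Y)$ is an infra-direct product of $G^Y$, then $L$ is finitely generated.
   Context: Let $X$ be a finite set and $X^*$ the free monoid on $X$, identified with the rooted tree in which the children of $w$ are the words $wx$. $X^n$ is the set of words of length $n$; $\mathrm{Aut}(X^* )$ the group of prefix-preserving bijections of $X^*$. For $g\in\mathrm{Aut}(X^* )$, $u\in X^*$ the section $g_u$ is defined by $g(uw)=g(u)g_u(w)$; $\psi_u(g)=g_u$, $\psi_u(S)=\{g_u:g\in S\}$. For $G\le\mathrm{Aut}(X^* )$: $\mathrm{st}_G(x)$ vertex stabilizer, $\mathrm{st}_G(Y)=\bigcap_{y\in Y}\mathrm{st}_G(y)$, $\mathrm{st}_G(n)=\mathrm{st}_G(X^n)$. A leaf set is a finite $Y\subseteq X^*$ no element of which is a prefix of another; spanning if there is $N$ such that every word of length $\ge N$ has a prefix in $Y$. $G^Y$ is the group of automorphisms acting as an element of $G$ below each $y\in Y$ and trivially elsewhere. $\mathrm{st}_L(Y)$ is an infra-direct product of $G^Y$ if $\psi_y(\mathrm{st}_L(Y))$ is a finite index subgroup of $G$ for every $y\in Y$. $G$ is strongly self-replicating if $g_x\in G$ for all $g\in G,x\in X^*$ and $\psi_x(\mathrm{st}_G(n))=G$ for all $n\ge1$, $x\in X^n$. Just infinite: infinite with every proper quotient finite. Congruence subgroup property: every finite index subgroup contains $\mathrm{st}_G(n)$ for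 some $n$. *)

theory Defs
  imports "HOL-Library.Sublist" "HOL-Algebra.Group" "HOL-Algebra.Coset" "HOL-Algebra.Generated_Groups"
begin

text \<open>The alphabet X is a finite type 'a; the free monoid X* is 'a list, ordered by prefix.
  Aut(X*) = prefix-preserving bijections of X*.\<close>

definition is_aut :: "('a list \<Rightarrow> 'a list) \<Rightarrow> bool" where
  "is_aut f \<longleftrightarrow> bij f \<and> (\<forall>u v. prefix u v \<longleftrightarrow> prefix (f u) (f v))"

definition autgroup :: "('a list \<Rightarrow> 'a list) monoid" where
  "autgroup = \<lparr>carrier = {f. is_aut f}, mult = (\<circ>), one = id\<rparr>"

definition grp :: "('a list \<Rightarrow> 'a list) set \<Rightarrow> ('a list \<Rightarrow> 'a list) monoid" where
  "grp H = autgroup\<lparr>carrier := H\<rparr>"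

text \<open>Section g_u, defined by g(uw) = g(u) g_u(w).\<close>
definition section_at :: "('a list \<Rightarrow> 'a list) \<Rightarrow> 'a list \<Rightarrow> ('a list \<Rightarrow> 'a list)" where
  "section_at g u = (\<lambda>w. drop (length u) (g (u @ w)))"

definition psi :: "'a list \<Rightarrow> ('a list \<Rightarrow> 'a list) set \<Rightarrow> ('a list \<Rightarrow> 'a list) set" where
  "psi u S = (\<lambda>g. section_at g u) ` S"

definition level :: "nat \<Rightarrow> 'a list set" where
  "level n = {w. length w = n}"

definition stab_set :: "('a list \<Rightarrow> 'a list) set \<Rightarrow> 'a list set \<Rightarrow> ('a list \<Rightarrow> 'a list) set" where
  "stab_set G Y = {g \<in> G. \<forall>y\<in>Y. g y = y}"

definition stab_level :: "('a list \<Rightarrow> 'a list) set \<Rightarrow> nat \<Rightarrow> ('a list \<Rightarrow> 'a list) set" where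
  "stab_level G n = stab_set G (level n)"

definition finite_index :: "('a list \<Rightarrow> 'a list) set \<Rightarrow> ('a list \<Rightarrow> 'a list) set \<Rightarrow> bool" where
  "finite_index H G \<longleftrightarrow> finite (rcosets\<^bsub>grp G\<^esub> H)"

definition fin_gen :: "('a list \<Rightarrow> 'a list) set \<Rightarrow> bool" where
  "fin_gen G \<longleftrightarrow> (\<exists>S. finite S \<and> S \<subseteq> G \<and> generate autgroup S = G)"

definition just_infinite :: "('a list \<Rightarrow> 'a list) set \<Rightarrow> bool" where
  "just_infinite G \<longleftrightarrow> infinite G \<and>
     (\<forall>N. N \<lhd> grp G \<and> N \<noteq> {id} \<longrightarrow> finite_index N G)"

definition strongly_self_replicating :: "('a list \<Rightarrow> 'a list) set \<Rightarrow> bool" where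
  "strongly_self_replicating G \<longleftrightarrow>
     (\<forall>g\<in>G. \<forall>x. section_at g x \<in> G) \<and>
     (\<forall>n\<ge>1. \<forall>x. length x = n \<longrightarrow> psi x (stab_level G n) = G)"

definition congruence_subgroup_property :: "('a list \<Rightarrow> 'a list) set \<Rightarrow> bool" where
  "congruence_subgroup_property G \<longleftrightarrow>
     (\<forall>H. subgroup H (grp G) \<and> finite_index H G \<longrightarrow> (\<exists>n. stab_level G n \<subseteq> H))"

definition leaf_set :: "'a list set \<Rightarrow> bool" where
  "leaf_set Y \<longleftrightarrow> finite Y \<and> (\<forall>y\<in>Y. \<forall>z\<in>Y. prefix y z \<longrightarrow> y = z)"

definition spanning :: "'a list set \<Rightarrow> bool" where
  "spanning Y \<longleftrightarrow> (\<exists>N. \<forall>w. length w \<ge> N \<longrightarrow> (\<exists>y\<in>Y. prefix y w))"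

definition infra_direct :: "('a list \<Rightarrow> 'a list) set \<Rightarrow> ('a list \<Rightarrow> 'a list) set \<Rightarrow> 'a list set \<Rightarrow> bool" where
  "infra_direct G L Y \<longleftrightarrow>
     (\<forall>y\<in>Y. subgroup (psi y (stab_set L Y)) (grp G) \<and> finite_index (psi y (stab_set L Y)) G)"

end

(*
  Let K = st_L(Y). As Y is finite, K has finite index in L, so it suffices that K is finitely
  generated. Listing Y as y_1, ..., y_k, the elements of K with trivial sections at y_1, ..., y_j
  form a descending chain of subgroups from K to the trivial group (Y is spanning), and the section
  at y_(j+1) maps the j-th term onto a subgroup C of G with kernel the next term. So it suffices
  that each such C is finitely generated. C is normalized by psi_y(K), which has finite index in G,
  hence contains a level stabilizer st_G(m) with m >= 1 by the congruence subgroup property; then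
  C meets st_G(m) in a subgroup of finite index in C that is normalized by st_G(m). Running the same
  chain argument on that subgroup along the words of length m, every section group is now
  normalized by psi_x(st_G(m)) = G, hence normal in G, hence trivial or of finite index (G is just
  infinite), hence finitely generated by Schreier's lemma.
*)
theory Submission
  imports Defs
begin

section \<open>Finitely generated subgroups\<close>

definition finitely_generated :: "('g, 'b) monoid_scheme \<Rightarrow> 'g set \<Rightarrow> bool" where
  "finitely_generated G H \<longleftrightarrow> (\<exists>S. finite S \<and> S \<subseteq> H \<and> generate G S = H)"

context group
begin

lemma finitely_generated_trivial: "finitely_generated G {\<one>}"
  unfolding finitely_generated_def using generate_empty by blast

lemma finitely_generated_extension:
  assumes A: "subgroup A G" and \<phi>: "group_hom (G\<lparr>carrier := A\<rparr>) H \<phi>"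
    and image: "finitely_generated H (\<phi> ` A)"
    and kernel: "finitely_generated G (kernel (G\<lparr>carrier := A\<rparr>) H \<phi>)"
  shows "finitely_generated G A"
proof -
  interpret \<phi>: group_hom "G\<lparr>carrier := A\<rparr>" H \<phi> by (rule \<phi>)
  obtain SI where SI: "finite SI" "SI \<subseteq> \<phi> ` A" "generate H SI = \<phi> ` A"
    using image unfolding finitely_generated_def by blast
  obtain SA where SA: "finite SA" "SA \<subseteq> A" "SI = \<phi> ` SA"
    using finite_subset_image[OF SI(1,2)] by blast
  obtain SK where SK: "finite SK" "SK \<subseteq> A" "generate G SK = kernel (G\<lparr>carrier := A\<rparr>) H \<phi>"
    using kernel unfolding finitely_generated_def kernel_def by auto
  define T where "T = generate G (SA \<union> SK)"
  have T_A: "T \<subseteq> A"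
    unfolding T_def using SA(2) SK(2) by (intro generate_subgroup_incl[OF _ A]) auto
  have lift: "\<exists>t\<in>T. \<phi> t = \<phi> a" if "a \<in> A" for a
  proof -
    have "\<phi> ` generate G SA = \<phi> ` A"
      using \<phi>.generate_img[of SA] SA SI(3) generate_consistent[OF SA(2) A] by simp
    moreover have "generate G SA \<subseteq> T" unfolding T_def by (rule mono_generate) simp
    ultimately show ?thesis using that by (metis image_iff subsetD)
  qed
  have "A \<subseteq> T"
  proof
    fix a assume a: "a \<in> A"
    then obtain t where t: "t \<in> T" "\<phi> t = \<phi> a" using lift by blast
    with T_A have t_A: "t \<in> A" and a_t: "a \<otimes> inv t \<in> A"
      using A a by (auto intro: subgroup.m_closed subgroup.m_inv_closed)
    have "\<phi> (a \<otimes> inv t) = \<one>\<^bsub>H\<^esub>"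
      using \<phi>.hom_mult[of a "inv t"] \<phi>.hom_inv[of t] m_inv_consistent[OF A t_A] a t_A t(2)
        A subgroup.m_inv_closed by fastforce
    then have "a \<otimes> inv t \<in> generate G SK" using a_t SK(3) unfolding kernel_def by simp
    then have "a \<otimes> inv t \<in> T" unfolding T_def using mono_generate[of SK "SA \<union> SK"] by blast
    then have "(a \<otimes> inv t) \<otimes> t \<in> T" using t(1) unfolding T_def by (rule generate.eng)
    then show "a \<in> T" using a t_A subgroup.mem_carrier[OF A] by (simp add: m_assoc)
  qed
  then show ?thesis
    unfolding finitely_generated_def using T_A SA SK by (intro exI[of _ "SA \<union> SK"]) (auto simp: T_def)
qed

lemma finite_index_transversal:
  assumes H: "subgroup H G" and B: "subgroup B G" and index: "finite ((\<lambda>b. H #> b) ` B)"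
  obtains T where "finite T" "T \<subseteq> B" "\<one> \<in> T" "\<And>b. b \<in> B \<Longrightarrow> \<exists>r\<in>T. b \<otimes> inv r \<in> H"
proof -
  obtain T0 where T0: "finite T0" "T0 \<subseteq> B" "(\<lambda>b. H #> b) ` B = (\<lambda>b. H #> b) ` T0"
    using finite_subset_image[OF index subset_refl] by blast
  have "\<exists>r\<in>T0. b \<otimes> inv r \<in> H" if b: "b \<in> B" for b
  proof -
    obtain r where r: "r \<in> T0" "H #> b = H #> r" using T0(3) b by blast
    then have "b \<in> H #> r" using rcos_self[OF _ H] b subgroup.mem_carrier[OF B] by metis
    then have "b \<otimes> inv r \<in> H"
      using subgroup.rcos_module_imp[OF H is_group] r(1) T0(2) subgroup.mem_carrier[OF B] by blast
    then show ?thesis using r(1) by blast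
  qed
  then show thesis
    using that[of "insert \<one> T0"] T0(1,2) subgroup.one_closed[OF B] by blast
qed

lemma finitely_generated_of_finite_index:
  assumes K: "subgroup K G" and B: "subgroup B G" and K_B: "K \<subseteq> B"
    and fg: "finitely_generated G K" and index: "finite ((\<lambda>b. K #> b) ` B)"
  shows "finitely_generated G B"
proof -
  obtain SK where SK: "finite SK" "SK \<subseteq> K" "generate G SK = K"
    using fg unfolding finitely_generated_def by blast
  obtain T where T: "finite T" "T \<subseteq> B" "\<one> \<in> T" "\<And>b. b \<in> B \<Longrightarrow> \<exists>r\<in>T. b \<otimes> inv r \<in> K"
    using finite_index_transversal[OF K B index] by blast
  have "B \<subseteq> generate G (SK \<union> T)"
  proof
    fix b assume b: "b \<in> B"
    then obtain r where r: "r \<in> T" "b \<otimes> inv r \<in> K" using T(4) by blast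
    have carrier: "b \<in> carrier G" "r \<in> carrier G" using b r(1) T(2) subgroup.mem_carrier[OF B] by auto
    have "b \<otimes> inv r \<in> generate G (SK \<union> T)" using r(2) SK(3) mono_generate[of SK "SK \<union> T"] by blast
    moreover have "r \<in> generate G (SK \<union> T)" using r(1) by (simp add: generate.incl)
    ultimately have "b \<otimes> inv r \<otimes> r \<in> generate G (SK \<union> T)" by (rule generate.eng)
    then show "b \<in> generate G (SK \<union> T)" using carrier by (simp add: m_assoc)
  qed
  moreover have "generate G (SK \<union> T) \<subseteq> B"
    using SK(2) K_B T(2) by (intro generate_subgroup_incl[OF _ B]) auto
  ultimately show ?thesis
    unfolding finitely_generated_def using SK T K_B by (intro exI[of _ "SK \<union> T"]) auto
qed

lemma rcos_Int_subgroup: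
  assumes H: "subgroup H G" and C: "subgroup C G" and c: "c \<in> C"
  shows "(H \<inter> C) #> c = (H #> c) \<inter> C"
proof -
  have "h \<in> C" if "h \<in> H" "h \<otimes> c \<in> C" for h
  proof -
    have "h = (h \<otimes> c) \<otimes> inv c"
      using that c H C by (simp add: m_assoc subgroup.mem_carrier)
    then show ?thesis using that c C by (metis subgroup.m_closed subgroup.m_inv_closed)
  qed
  then show ?thesis using c C unfolding r_coset_def by (auto intro: subgroup.m_closed)
qed

lemma finite_index_Int_subgroup:
  assumes H: "subgroup H G" and C: "subgroup C G" and C_B: "C \<subseteq> B"
    and index: "finite ((\<lambda>b. H #> b) ` B)"
  shows "finite ((\<lambda>c. (H \<inter> C) #> c) ` C)"
proof -
  have "(\<lambda>c. (H \<inter> C) #> c) ` C = (\<lambda>X. X \<inter> C) ` (\<lambda>c. H #> c) ` C"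
    using rcos_Int_subgroup[OF H C] by (auto simp: image_image)
  moreover have "finite ((\<lambda>c. H #> c) ` C)"
    using index C_B by (meson finite_subset image_mono)
  ultimately show ?thesis by simp
qed

lemma generate_right_mult_closed:
  assumes M: "M \<subseteq> carrier G" and S: "S \<subseteq> carrier G"
    and closed: "\<And>m s. m \<in> M \<Longrightarrow> s \<in> S \<Longrightarrow> m \<otimes> s \<in> M \<and> m \<otimes> inv s \<in> M"
    and b: "b \<in> generate G S" and m: "m \<in> M"
  shows "m \<otimes> b \<in> M"
  using b m
proof (induction arbitrary: m rule: generate.induct)
  case one
  then show ?case using M by (simp add: subsetD)
next
  case (incl s)
  then show ?case using closed by blast
next
  case (inv s)
  then show ?case using closed by blast
next
  case (eng b1 b2)
  have "b1 \<in> carrier G" "b2 \<in> carrier G" using eng.hyps generate_in_carrier[OF S] by auto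
  then have "m \<otimes> (b1 \<otimes> b2) = m \<otimes> b1 \<otimes> b2" using eng.prems M by (simp add: m_assoc subsetD)
  then show ?case using eng.IH eng.prems by simp
qed

lemma finitely_generated_finite_index_subgroup:
  assumes H: "subgroup H G" and B: "subgroup B G" and H_B: "H \<subseteq> B"
    and fg: "finitely_generated G B" and index: "finite ((\<lambda>b. H #> b) ` B)"
  shows "finitely_generated G H"
proof -
  obtain SB where SB: "finite SB" "SB \<subseteq> B" "generate G SB = B"
    using fg unfolding finitely_generated_def by blast
  obtain T where T: "finite T" "T \<subseteq> B" "\<one> \<in> T"
    and transversal: "\<And>b. b \<in> B \<Longrightarrow> \<exists>r\<in>T. b \<otimes> inv r \<in> H"
    using finite_index_transversal[OF H B index] by blast
  \<comment> \<open>Schreier generators: the elements t s (inv r) of H with t, r in the transversal and s a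
    generator, its inverse or the unit. The products u t with u generated by them are closed under
    right multiplication by generators, hence exhaust B, and u t \<in> H forces t to be a generator.\<close>
  define X where "X = insert \<one> (SB \<union> m_inv G ` SB)"
  define S where "S = H \<inter> (\<lambda>(t, s, r). t \<otimes> s \<otimes> inv r) ` (T \<times> X \<times> T)"
  define U where "U = generate G S"
  define M where "M = {u \<otimes> t | u t. u \<in> U \<and> t \<in> T}"
  have X: "X \<subseteq> B"
    using SB(2) B unfolding X_def by (auto intro: subgroup.one_closed subgroup.m_inv_closed)
  have S: "finite S" "S \<subseteq> H" using T(1) SB(1) unfolding S_def X_def by auto
  have U_H: "U \<subseteq> H" unfolding U_def using generate_subgroup_incl[OF S(2) H] .
  have carrier: "U \<subseteq> carrier G" "T \<subseteq> carrier G" "X \<subseteq> carrier G"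
    using U_H T(2) X subgroup.subset[OF H] subgroup.subset[OF B] by blast+
  have M_carrier: "M \<subseteq> carrier G" using carrier unfolding M_def by blast
  have step: "m \<otimes> s \<in> M" if m: "m \<in> M" and s: "s \<in> X" for m s
  proof -
    obtain u t where ut: "u \<in> U" "t \<in> T" "m = u \<otimes> t" using m unfolding M_def by blast
    have "t \<otimes> s \<in> B" using ut(2) s T(2) X by (blast intro: subgroup.m_closed[OF B])
    then obtain r where r: "r \<in> T" "t \<otimes> s \<otimes> inv r \<in> H" using transversal by blast
    then have "t \<otimes> s \<otimes> inv r \<in> U" using ut(2) s unfolding U_def S_def by (force intro: generate.incl)
    with ut(1) have "u \<otimes> (t \<otimes> s \<otimes> inv r) \<in> U" unfolding U_def by (rule generate.eng)
    moreover have "m \<otimes> s = u \<otimes> (t \<otimes> s \<otimes> inv r) \<otimes> r"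
      using ut s r(1) carrier by (simp add: m_assoc subsetD)
    ultimately show ?thesis using r(1) unfolding M_def by blast
  qed
  have "\<one> \<in> M" using generate.one[of G S] T(3) unfolding M_def U_def by force
  have B_M: "B \<subseteq> M"
  proof
    fix b assume "b \<in> B"
    then have "b \<in> generate G SB" "b \<in> carrier G" using SB(3) subgroup.mem_carrier[OF B] by auto
    moreover have "SB \<subseteq> carrier G" using SB(2) subgroup.subset[OF B] by blast
    moreover have "m \<otimes> s \<in> M \<and> m \<otimes> inv s \<in> M" if "m \<in> M" "s \<in> SB" for m s
      using step that unfolding X_def by blast
    ultimately have "\<one> \<otimes> b \<in> M"
      using generate_right_mult_closed[OF M_carrier] \<open>\<one> \<in> M\<close> by blast
    then show "b \<in> M" using \<open>b \<in> carrier G\<close> by simp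
  qed
  have "H \<subseteq> U"
  proof
    fix h assume h: "h \<in> H"
    then obtain u t where ut: "u \<in> U" "t \<in> T" "h = u \<otimes> t" using B_M H_B unfolding M_def by blast
    have "t = inv u \<otimes> h"
      using ut carrier h subgroup.mem_carrier[OF H] by (simp add: inv_solve_left subsetD)
    then have "t \<in> H" using ut(1) U_H h H by (metis subgroup.m_closed subgroup.m_inv_closed subsetD)
    moreover have "t = t \<otimes> \<one> \<otimes> inv \<one>" using ut(2) carrier by (simp add: subsetD)
    ultimately have "t \<in> S" using ut(2) T(3) unfolding S_def X_def by force
    then have "t \<in> U" unfolding U_def by (rule generate.incl)
    then show "h \<in> U" using ut generate.eng[of u G S t] unfolding U_def by simp
  qed
  then show ?thesis
    unfolding finitely_generated_def using S U_H unfolding U_def by blast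
qed

end

section \<open>Automorphisms of the rooted tree and their sections\<close>

lemma is_aut_id: "is_aut id"
  unfolding is_aut_def by auto

lemma is_aut_comp: "is_aut f \<Longrightarrow> is_aut g \<Longrightarrow> is_aut (f \<circ> g)"
  unfolding is_aut_def by (auto intro: bij_comp)

lemma is_aut_inv_into: assumes "is_aut f" shows "is_aut (inv_into UNIV f)"
proof -
  have f: "bij f" "\<And>u v. prefix u v \<longleftrightarrow> prefix (f u) (f v)" using assms unfolding is_aut_def by auto
  have "prefix u v \<longleftrightarrow> prefix (inv_into UNIV f u) (inv_into UNIV f v)" for u v
    using f(2)[of "inv_into UNIV f u" "inv_into UNIV f v"] f(1) by (simp add: bij_is_surj surj_f_inv_f)
  then show ?thesis unfolding is_aut_def using f(1) bij_imp_bij_inv by blast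
qed

lemma carrier_autgroup [simp]: "carrier autgroup = {f. is_aut f}"
  and mult_autgroup [simp]: "mult autgroup = (\<circ>)"
  and one_autgroup [simp]: "one autgroup = id"
  by (auto simp: autgroup_def)

lemma group_autgroup: "group autgroup"
proof (rule groupI)
  fix f assume "f \<in> carrier autgroup"
  then have "inv_into UNIV f \<in> carrier autgroup" "inv_into UNIV f \<circ> f = id"
    using is_aut_inv_into by (auto simp: is_aut_def bij_is_inj)
  then show "\<exists>g\<in>carrier autgroup. g \<otimes>\<^bsub>autgroup\<^esub> f = \<one>\<^bsub>autgroup\<^esub>" by auto
qed (auto simp: is_aut_id is_aut_comp comp_assoc)

interpretation Aut: group autgroup
  by (rule group_autgroup)

abbreviation aut_inv :: "('a list \<Rightarrow> 'a list) \<Rightarrow> 'a list \<Rightarrow> 'a list" where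
  "aut_inv g \<equiv> inv\<^bsub>autgroup\<^esub> g"

lemma is_aut_aut_inv: "is_aut g \<Longrightarrow> is_aut (aut_inv g)"
  using Aut.inv_closed by auto

lemma comp_aut_inv: "is_aut g \<Longrightarrow> g \<circ> aut_inv g = id"
  using Aut.r_inv[of g] by simp

lemma aut_inv_comp: "is_aut g \<Longrightarrow> aut_inv g \<circ> g = id"
  using Aut.l_inv[of g] by simp

lemma aut_inv_fixed: assumes "is_aut g" "g x = x" shows "aut_inv g x = x"
  using aut_inv_comp[OF assms(1)] assms(2) by (metis comp_apply id_apply)

lemma card_prefixes: "card {v. prefix v u} = Suc (length u)"
proof -
  have "{v. prefix v u} = set (prefixes u)" by auto
  then show ?thesis using distinct_card[OF distinct_prefixes] by simp
qed

lemma aut_length: assumes "is_aut f" shows "length (f u) = length u"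
proof -
  have f: "bij f" "\<And>u v. prefix u v \<longleftrightarrow> prefix (f u) (f v)" using assms unfolding is_aut_def by auto
  have "f ` {v. prefix v u} = {w. prefix w (f u)}"
  proof (intro equalityI subsetI)
    fix w assume "w \<in> {w. prefix w (f u)}"
    moreover obtain v where "w = f v" using f(1) by (metis bij_pointE)
    ultimately show "w \<in> f ` {v. prefix v u}" using f(2) by auto
  qed (use f(2) in auto)
  moreover have "inj_on f {v. prefix v u}" using f(1) bij_is_inj inj_on_subset by blast
  ultimately have "card {w. prefix w (f u)} = card {v. prefix v u}" by (metis card_image)
  then show ?thesis by (simp add: card_prefixes)
qed

lemma aut_append: assumes "is_aut f" shows "f (v @ w) = f v @ section_at f v w"
proof -
  have "prefix (f v) (f (v @ w))" using assms unfolding is_aut_def by auto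
  then obtain z where "f (v @ w) = f v @ z" by (auto simp: prefix_def)
  then show ?thesis using aut_length[OF assms] unfolding section_at_def by simp
qed

lemma section_comp: assumes "is_aut g" "is_aut h"
  shows "section_at (g \<circ> h) v = section_at g (h v) \<circ> section_at h v"
proof
  fix w
  have "(g \<circ> h) (v @ w) = g (h v) @ section_at g (h v) (section_at h v w)"
    using aut_append[OF assms(2)] aut_append[OF assms(1)] by simp
  moreover have "length (g (h v)) = length v" using aut_length assms by metis
  ultimately show "section_at (g \<circ> h) v w = (section_at g (h v) \<circ> section_at h v) w"
    unfolding section_at_def[of "g \<circ> h"] by simp
qed

lemma section_comp_fixed: "is_aut g \<Longrightarrow> is_aut h \<Longrightarrow> h v = v \<Longrightarrow>
    section_at (g \<circ> h) v = section_at g v \<circ> section_at h v"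
  using section_comp by metis

lemma section_id [simp]: "section_at id v = id"
  unfolding section_at_def by auto

lemma is_aut_section: assumes g: "is_aut g" shows "is_aut (section_at g v)"
proof -
  let ?h = "section_at g v"
  have b: "bij g" and p: "\<And>u v. prefix u v \<longleftrightarrow> prefix (g u) (g v)" using g is_aut_def by auto
  have gv: "g (v @ w) = g v @ ?h w" for w using aut_append[OF g] .
  have "inj ?h"
  proof (rule injI)
    fix w w' assume "?h w = ?h w'"
    then have "g (v @ w) = g (v @ w')" using gv by simp
    then show "w = w'" using b bij_is_inj by (metis inj_eq same_append_eq)
  qed
  moreover have "surj ?h" unfolding surj_def
  proof
    fix z
    obtain u where u: "g u = g v @ z" using b by (metis bij_pointE)
    then have "prefix v u" using p by (metis prefixI)
    then obtain w where "u = v @ w" by (auto simp: prefix_def)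
    then show "\<exists>w. z = ?h w" using gv u by auto
  qed
  moreover have "prefix w w' \<longleftrightarrow> prefix (?h w) (?h w')" for w w'
    using p[of "v @ w" "v @ w'"] gv by simp
  ultimately show ?thesis unfolding is_aut_def bij_def by blast
qed

lemma section_aut_inv: assumes g: "is_aut g" and x: "g x = x"
  shows "section_at (aut_inv g) x = aut_inv (section_at g x)"
proof -
  have "section_at g x \<circ> section_at (aut_inv g) x = id"
    using section_comp_fixed[OF g is_aut_aut_inv[OF g] aut_inv_fixed[OF g x]] comp_aut_inv[OF g] by simp
  then have "section_at g x \<otimes>\<^bsub>autgroup\<^esub> section_at (aut_inv g) x = \<one>\<^bsub>autgroup\<^esub>" by simp
  moreover have "section_at g x \<in> carrier autgroup" "section_at (aut_inv g) x \<in> carrier autgroup"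
    using is_aut_section g is_aut_aut_inv by auto
  ultimately show ?thesis using Aut.inv_equality[OF Aut.inv_comm] by metis
qed

lemma section_conj:
  assumes s: "is_aut s" and e: "is_aut e" and "s x = x" "e x = x"
  shows "section_at (s \<circ> e \<circ> aut_inv s) x = section_at s x \<circ> section_at e x \<circ> aut_inv (section_at s x)"
  using assms section_comp_fixed[OF is_aut_comp[OF s e] is_aut_aut_inv[OF s] aut_inv_fixed[OF s]]
    section_comp_fixed[OF s e] section_aut_inv[OF s] by simp

lemma aut_fixes_shorter:
  assumes g: "is_aut g" and fixed: "\<And>u. length u = m \<Longrightarrow> g u = u" and "length u \<le> m"
  shows "g u = u"
proof -
  define u' where "u' = u @ replicate (m - length u) undefined"
  have "g u' = u'" using fixed assms(3) unfolding u'_def by simp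
  moreover have "prefix u u'" unfolding u'_def by simp
  ultimately have "prefix (g u) u'" using g unfolding is_aut_def by metis
  then show "g u = u" using \<open>prefix u u'\<close> aut_length[OF g] by (metis prefix_length_prefix prefix_order.antisym order_refl)
qed

lemma aut_eq_id_if_fixes_long:
  assumes g: "is_aut g" and fixed: "\<And>u. N \<le> length u \<Longrightarrow> g u = u"
  shows "g = id"
proof
  fix u :: "'a list"
  show "g u = id u" using aut_fixes_shorter[OF g, of "max N (length u)"] fixed by simp
qed

lemma finite_level: "finite (level n :: 'a::finite list set)"
  using finite_lists_length_eq[of "UNIV :: 'a set" n] unfolding level_def by simp

lemma spanning_level: "spanning (level m)"
  unfolding spanning_def level_def
proof (intro exI[of _ m] allI impI)
  fix w :: "'a list" assume "m \<le> length w"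
  then show "\<exists>y\<in>{w. length w = m}. prefix y w" by (intro bexI[of _ "take m w"]) (auto simp: take_is_prefix)
qed

lemma stab_set_subgroup:
  assumes H: "subgroup H autgroup" shows "subgroup (stab_set H Z) autgroup"
proof (rule Aut.subgroupI)
  show "stab_set H Z \<subseteq> carrier autgroup" "stab_set H Z \<noteq> {}"
    using subgroup.subset[OF H] subgroup.one_closed[OF H] unfolding stab_set_def by auto
next
  fix a assume a: "a \<in> stab_set H Z"
  then have "is_aut a" using subgroup.subset[OF H] unfolding stab_set_def by auto
  then show "aut_inv a \<in> stab_set H Z"
    using a subgroup.m_inv_closed[OF H] aut_inv_fixed unfolding stab_set_def by auto
next
  fix a b assume "a \<in> stab_set H Z" "b \<in> stab_set H Z"
  then show "a \<otimes>\<^bsub>autgroup\<^esub> b \<in> stab_set H Z"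
    using subgroup.m_closed[OF H, of a b] unfolding stab_set_def by auto
qed

lemma stab_level_Suc_subset:
  assumes G: "subgroup G autgroup" shows "stab_level G (Suc n) \<subseteq> stab_level G n"
proof
  fix g assume g: "g \<in> stab_level G (Suc n)"
  then have "is_aut g" using subgroup.subset[OF G] unfolding stab_level_def stab_set_def by auto
  then have "g u = u" if "length u = n" for u
    using aut_fixes_shorter[of g "Suc n" u] g that unfolding stab_level_def stab_set_def level_def by auto
  then show "g \<in> stab_level G n" using g unfolding stab_level_def stab_set_def level_def by auto
qed

lemma rcos_stab_set:
  assumes H: "subgroup H autgroup" and b: "b \<in> H"
  shows "stab_set H Z #>\<^bsub>autgroup\<^esub> b = {g \<in> H. restrict (aut_inv g) Z = restrict (aut_inv b) Z}"
proof (intro equalityI subsetI)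
  fix g assume "g \<in> stab_set H Z #>\<^bsub>autgroup\<^esub> b"
  then obtain s where s: "s \<in> stab_set H Z" "g = s \<circ> b" unfolding r_coset_def by auto
  have "is_aut s" "is_aut b" using s(1) b subgroup.subset[OF H] unfolding stab_set_def by auto
  then have "aut_inv g = aut_inv b \<circ> aut_inv s" using s(2) Aut.inv_mult_group by simp
  then have "restrict (aut_inv g) Z = restrict (aut_inv b) Z"
    using s(1) aut_inv_fixed[OF \<open>is_aut s\<close>] unfolding stab_set_def by (intro restrict_ext) simp
  then show "g \<in> {g \<in> H. restrict (aut_inv g) Z = restrict (aut_inv b) Z}"
    using s b subgroup.m_closed[OF H] unfolding stab_set_def by auto
next
  fix g assume g: "g \<in> {g \<in> H. restrict (aut_inv g) Z = restrict (aut_inv b) Z}"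
  have auts: "is_aut g" "is_aut b" using g b subgroup.subset[OF H] by auto
  have "(g \<circ> aut_inv b) z = z" if "z \<in> Z" for z
  proof -
    have "aut_inv b z = aut_inv g z" using g that by (metis (mono_tags, lifting) mem_Collect_eq restrict_apply')
    then show ?thesis using comp_aut_inv[OF auts(1)] by (metis comp_apply id_apply)
  qed
  then have "g \<circ> aut_inv b \<in> stab_set H Z"
    using subgroup.m_closed[OF H] subgroup.m_inv_closed[OF H b] g unfolding stab_set_def by auto
  moreover have "g = g \<circ> aut_inv b \<circ> b" using aut_inv_comp[OF auts(2)] by (simp add: comp_assoc)
  ultimately show "g \<in> stab_set H Z #>\<^bsub>autgroup\<^esub> b" unfolding r_coset_def by auto
qed

lemma finite_index_stab_set:
  assumes H: "subgroup H autgroup" and Z: "finite (Z :: 'a::finite list set)"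
  shows "finite ((\<lambda>b. stab_set H Z #>\<^bsub>autgroup\<^esub> b) ` H)"
proof -
  let ?r = "\<lambda>b. restrict (aut_inv b) Z"
  have cosets: "(\<lambda>b. stab_set H Z #>\<^bsub>autgroup\<^esub> b) ` H = (\<lambda>f. {g \<in> H. ?r g = f}) ` ?r ` H"
    unfolding image_image using rcos_stab_set[OF H] by (rule image_cong[OF refl])
  have "?r ` H \<subseteq> (\<Pi>\<^sub>E z\<in>Z. level (length z))"
  proof
    fix f assume "f \<in> ?r ` H"
    then obtain b where "b \<in> H" "f = ?r b" by blast
    then have "is_aut (aut_inv b)" using subgroup.subset[OF H] is_aut_aut_inv by auto
    then show "f \<in> (\<Pi>\<^sub>E z\<in>Z. level (length z))"
      using \<open>f = ?r b\<close> aut_length[OF \<open>is_aut (aut_inv b)\<close>] by (simp add: Pi_iff level_def)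
  qed
  moreover have "finite (\<Pi>\<^sub>E z\<in>Z. level (length z) :: 'a list set)"
    using Z finite_level by (intro finite_PiE) auto
  ultimately have "finite (?r ` H)" by (rule finite_subset)
  then show ?thesis unfolding cosets by (rule finite_imageI)
qed

lemma subgroup_grp_iff:
  assumes G: "subgroup G autgroup"
  shows "subgroup X (grp G) \<longleftrightarrow> subgroup X autgroup \<and> X \<subseteq> G"
proof
  assume X: "subgroup X (grp G)"
  have "group (grp G)" unfolding grp_def using Aut.subgroup_imp_group[OF G] .
  then have "group (autgroup\<lparr>carrier := X\<rparr>)"
    using group.subgroup_imp_group[OF _ X] by (simp add: grp_def)
  moreover have "X \<subseteq> G" using subgroup.subset[OF X] by (simp add: grp_def autgroup_def)
  ultimately show "subgroup X autgroup \<and> X \<subseteq> G"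
    using subgroup.subset[OF G] Aut.group_incl_imp_subgroup by blast
next
  assume "subgroup X autgroup \<and> X \<subseteq> G"
  then show "subgroup X (grp G)" unfolding grp_def using Aut.subgroup_incl[OF _ G] by blast
qed

lemma finite_index_iff: "finite_index H G \<longleftrightarrow> finite ((\<lambda>b. H #>\<^bsub>autgroup\<^esub> b) ` G)"
proof -
  have "rcosets\<^bsub>grp G\<^esub> H = (\<lambda>b. H #>\<^bsub>autgroup\<^esub> b) ` G"
    by (auto simp: RCOSETS_def r_coset_def grp_def autgroup_def)
  then show ?thesis unfolding finite_index_def by simp
qed

section \<open>Finite generation through sections\<close>

definition trivial_sections :: "('a list \<Rightarrow> 'a list) set \<Rightarrow> 'a list set \<Rightarrow> ('a list \<Rightarrow> 'a list) set" where
  "trivial_sections E W = {e \<in> E. \<forall>w\<in>W. section_at e w = id}"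

lemma section_hom:
  assumes E: "subgroup E autgroup" and fixed: "\<And>e. e \<in> E \<Longrightarrow> e x = x"
  shows "group_hom (autgroup\<lparr>carrier := E\<rparr>) autgroup (\<lambda>e. section_at e x)"
proof -
  have auts: "\<And>e. e \<in> E \<Longrightarrow> is_aut e" using subgroup.subset[OF E] by auto
  have "(\<lambda>e. section_at e x) \<in> hom (autgroup\<lparr>carrier := E\<rparr>) autgroup"
    unfolding hom_def by (auto simp: auts fixed is_aut_section section_comp_fixed)
  then show ?thesis
    using Aut.subgroup_imp_group[OF E] Aut.is_group unfolding group_hom_def group_hom_axioms_def by blast
qed

lemma psi_subgroup:
  assumes "subgroup E autgroup" "\<And>e. e \<in> E \<Longrightarrow> e x = x"
  shows "subgroup (psi x E) autgroup"
proof -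
  have "group_hom (autgroup\<lparr>carrier := E\<rparr>) autgroup (\<lambda>e. section_at e x)"
    using section_hom assms by blast
  then show ?thesis unfolding psi_def using group_hom.img_is_subgroup by fastforce
qed

lemma trivial_sections_subgroup:
  assumes E: "subgroup E autgroup" and fixed: "\<And>e w. e \<in> E \<Longrightarrow> w \<in> W \<Longrightarrow> e w = w"
  shows "subgroup (trivial_sections E W) autgroup"
proof (rule Aut.subgroupI)
  show "trivial_sections E W \<subseteq> carrier autgroup" "trivial_sections E W \<noteq> {}"
    using subgroup.subset[OF E] subgroup.one_closed[OF E] unfolding trivial_sections_def by auto
next
  fix a assume a: "a \<in> trivial_sections E W"
  then have "is_aut a" using subgroup.subset[OF E] unfolding trivial_sections_def by auto
  have "section_at (aut_inv a) w = id" if w: "w \<in> W" for w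
  proof -
    have "a \<in> E" "section_at a w = id" using a w unfolding trivial_sections_def by auto
    then show ?thesis using section_aut_inv[OF \<open>is_aut a\<close>, of w] fixed w Aut.inv_one by simp
  qed
  then show "aut_inv a \<in> trivial_sections E W"
    using a subgroup.m_inv_closed[OF E] unfolding trivial_sections_def by auto
next
  fix a b assume ab: "a \<in> trivial_sections E W" "b \<in> trivial_sections E W"
  then have "is_aut a" "is_aut b" using subgroup.subset[OF E] unfolding trivial_sections_def by auto
  have "section_at (a \<circ> b) w = id" if w: "w \<in> W" for w
  proof -
    have "b w = w" using ab(2) w fixed unfolding trivial_sections_def by blast
    then show ?thesis
      using ab w section_comp_fixed[OF \<open>is_aut a\<close> \<open>is_aut b\<close>] unfolding trivial_sections_def by simp
  qed
  then show "a \<otimes>\<^bsub>autgroup\<^esub> b \<in> trivial_sections E W"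
    using ab subgroup.m_closed[OF E] unfolding trivial_sections_def by auto
qed

lemma aut_eq_id_if_trivial_sections:
  assumes V: "spanning V" and e: "is_aut e"
    and fixed: "\<And>v. v \<in> V \<Longrightarrow> e v = v" and trivial: "\<And>v. v \<in> V \<Longrightarrow> section_at e v = id"
  shows "e = id"
proof -
  obtain N where N: "\<And>u. N \<le> length u \<Longrightarrow> \<exists>v\<in>V. prefix v u" using V unfolding spanning_def by blast
  have "e u = u" if u: "N \<le> length u" for u
  proof -
    obtain v w where "v \<in> V" "u = v @ w" using N[OF u] by (auto simp: prefix_def)
    then show ?thesis using aut_append[OF e, of v w] fixed trivial by simp
  qed
  then show ?thesis by (rule aut_eq_id_if_fixes_long[OF e])
qed

text \<open>The section at a new word x restricts to a homomorphism on the elements with trivial sections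
  at the words W already treated; its kernel consists of those with trivial sections on insert x W.\<close>
lemma finitely_generated_by_sections:
  assumes E: "subgroup E autgroup" and V: "finite V" "spanning V"
    and fixed: "\<And>e v. e \<in> E \<Longrightarrow> v \<in> V \<Longrightarrow> e v = v"
    and sections: "\<And>W x. W \<subseteq> V \<Longrightarrow> x \<in> V \<Longrightarrow> finitely_generated autgroup (psi x (trivial_sections E W))"
  shows "finitely_generated autgroup E"
proof -
  have "finitely_generated autgroup (trivial_sections E (V - R))" if "R \<subseteq> V" for R
    using finite_subset[OF that V(1)] that
  proof (induction R rule: finite_subset_induct)
    case empty
    have "trivial_sections E V \<subseteq> {id}"
    proof
      fix e assume e: "e \<in> trivial_sections E V"
      then have "is_aut e" using subgroup.subset[OF E] unfolding trivial_sections_def by auto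
      then show "e \<in> {id}"
        using aut_eq_id_if_trivial_sections[OF V(2)] e fixed unfolding trivial_sections_def by auto
    qed
    moreover have "id \<in> trivial_sections E V"
      using subgroup.one_closed[OF E] unfolding trivial_sections_def by simp
    ultimately have "trivial_sections E V = {id}" by blast
    then show ?case using Aut.finitely_generated_trivial by simp
  next
    case (insert x R)
    define A where "A = trivial_sections E (V - insert x R)"
    have A_E: "A \<subseteq> E" unfolding A_def trivial_sections_def by blast
    have A: "subgroup A autgroup"
      unfolding A_def using trivial_sections_subgroup[OF E] fixed by blast
    have hom: "group_hom (autgroup\<lparr>carrier := A\<rparr>) autgroup (\<lambda>e. section_at e x)"
      using section_hom[OF A] A_E fixed insert.hyps(2) by blast
    have "V - R = insert x (V - insert x R)" using insert.hyps(2,3) by blast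
    then have "kernel (autgroup\<lparr>carrier := A\<rparr>) autgroup (\<lambda>e. section_at e x) = trivial_sections E (V - R)"
      unfolding kernel_def A_def trivial_sections_def by auto
    moreover have "psi x A = (\<lambda>e. section_at e x) ` A" unfolding psi_def ..
    ultimately have "finitely_generated autgroup A"
      using Aut.finitely_generated_extension[OF A hom] insert.IH sections[of "V - insert x R" x] insert.hyps(2)
      unfolding A_def by auto
    then show ?case unfolding A_def .
  qed
  from this[of V] show ?thesis by (simp add: trivial_sections_def)
qed

definition normalizes :: "('a list \<Rightarrow> 'a list) set \<Rightarrow> ('a list \<Rightarrow> 'a list) set \<Rightarrow> bool" where
  "normalizes S E \<longleftrightarrow> (\<forall>s\<in>S. \<forall>e\<in>E. s \<circ> e \<circ> aut_inv s \<in> E)"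

lemma normalizes_psi_trivial_sections:
  assumes auts: "S \<subseteq> carrier autgroup" "E \<subseteq> carrier autgroup"
    and fixed: "\<And>g v. g \<in> S \<union> E \<Longrightarrow> v \<in> insert x W \<Longrightarrow> g v = v"
    and normal: "normalizes S E"
  shows "normalizes (psi x S) (psi x (trivial_sections E W))"
  unfolding normalizes_def
proof (intro ballI)
  fix s' e' assume "s' \<in> psi x S" "e' \<in> psi x (trivial_sections E W)"
  then obtain s e where s: "s \<in> S" "s' = section_at s x" and e: "e \<in> trivial_sections E W" "e' = section_at e x"
    unfolding psi_def by blast
  have auts: "is_aut s" "is_aut e" using s(1) e(1) auts unfolding trivial_sections_def by auto
  have conj: "section_at (s \<circ> e \<circ> aut_inv s) v = section_at s v \<circ> section_at e v \<circ> aut_inv (section_at s v)"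
    if v: "v \<in> insert x W" for v
  proof -
    have "s v = v" "e v = v" using fixed v s(1) e(1) unfolding trivial_sections_def by auto
    then show ?thesis by (rule section_conj[OF auts])
  qed
  have "s \<circ> e \<circ> aut_inv s \<in> E" using normal s(1) e(1) unfolding normalizes_def trivial_sections_def by blast
  moreover have "section_at (s \<circ> e \<circ> aut_inv s) w = id" if "w \<in> W" for w
    using conj[of w] that e(1) comp_aut_inv[OF is_aut_section[OF auts(1)]] unfolding trivial_sections_def by simp
  ultimately have "s \<circ> e \<circ> aut_inv s \<in> trivial_sections E W" unfolding trivial_sections_def by blast
  moreover have "s' \<circ> e' \<circ> aut_inv s' = section_at (s \<circ> e \<circ> aut_inv s) x"
    using conj[of x] s(2) e(2) by simp
  ultimately show "s' \<circ> e' \<circ> aut_inv s' \<in> psi x (trivial_sections E W)"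
    unfolding psi_def image_iff by blast
qed

lemma normal_grp_if_normalizes:
  assumes G: "subgroup G autgroup" and C: "subgroup C autgroup" "C \<subseteq> G" and normal: "normalizes G C"
  shows "C \<lhd> grp G"
proof (rule group.normal_invI)
  show "group (grp G)" unfolding grp_def using Aut.subgroup_imp_group[OF G] .
  show "subgroup C (grp G)" using subgroup_grp_iff[OF G] C by blast
next
  fix g c assume "g \<in> carrier (grp G)" "c \<in> C"
  then show "g \<otimes>\<^bsub>grp G\<^esub> c \<otimes>\<^bsub>grp G\<^esub> inv\<^bsub>grp G\<^esub> g \<in> C"
    using normal Aut.m_inv_consistent[OF G] unfolding normalizes_def by (simp add: grp_def)
qed

lemma psi_trivial_sections_subgroup:
  assumes E: "subgroup E autgroup" and fixed: "\<And>e v. e \<in> E \<Longrightarrow> v \<in> insert x W \<Longrightarrow> e v = v"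
  shows "subgroup (psi x (trivial_sections E W)) autgroup"
  using psi_subgroup[of "trivial_sections E W" x] trivial_sections_subgroup[OF E, of W] fixed
  unfolding trivial_sections_def by blast

lemma psi_subset_self_replicating:
  assumes "strongly_self_replicating G" "E \<subseteq> G"
  shows "psi x E \<subseteq> G"
  using assms unfolding strongly_self_replicating_def psi_def by blast

lemma subgroup_normalizes_self:
  assumes "subgroup E autgroup" shows "normalizes E E"
  unfolding normalizes_def
  using subgroup.m_closed[OF assms] subgroup.m_inv_closed[OF assms] by simp

lemma finitely_generated_if_normalized_by_level_stabilizer:
  fixes G E :: "('a::finite list \<Rightarrow> 'a list) set"
  assumes G: "subgroup G autgroup" and fg: "finitely_generated autgroup G"
    and ji: "just_infinite G" and ssr: "strongly_self_replicating G"
    and m: "1 \<le> m" and E: "subgroup E autgroup" "E \<subseteq> stab_level G m"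
    and normal: "normalizes (stab_level G m) E"
  shows "finitely_generated autgroup E"
proof (rule finitely_generated_by_sections[OF E(1) finite_level spanning_level])
  have fixed: "\<And>g v. g \<in> stab_level G m \<Longrightarrow> v \<in> level m \<Longrightarrow> g v = v"
    unfolding stab_level_def stab_set_def by blast
  then show "\<And>e v. e \<in> E \<Longrightarrow> v \<in> level m \<Longrightarrow> e v = v" using E(2) by blast
  fix W :: "'a list set" and x :: "'a list" assume W: "W \<subseteq> level m" and x: "x \<in> level m"
  define C where "C = psi x (trivial_sections E W)"
  have fixed_Wx: "\<And>g v. g \<in> stab_level G m \<union> E \<Longrightarrow> v \<in> insert x W \<Longrightarrow> g v = v"
    using fixed E(2) W x by blast
  have C: "subgroup C autgroup"
    unfolding C_def by (rule psi_trivial_sections_subgroup[OF E(1)]) (use fixed_Wx in blast)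
  have "trivial_sections E W \<subseteq> G"
    using E(2) unfolding trivial_sections_def stab_level_def stab_set_def by blast
  then have C_G: "C \<subseteq> G" unfolding C_def by (rule psi_subset_self_replicating[OF ssr])
  have "stab_level G m \<subseteq> carrier autgroup"
    using subgroup.subset[OF G] unfolding stab_level_def stab_set_def by auto
  then have "normalizes (psi x (stab_level G m)) C"
    unfolding C_def using subgroup.subset[OF E(1)] fixed_Wx normal by (rule normalizes_psi_trivial_sections)
  moreover have "psi x (stab_level G m) = G"
    using ssr m x unfolding strongly_self_replicating_def level_def by blast
  ultimately have "C \<lhd> grp G" using normal_grp_if_normalizes[OF G C C_G] by simp
  then have "C = {id} \<or> finite_index C G" using ji unfolding just_infinite_def by auto
  then have "finitely_generated autgroup C"
  proof
    assume "C = {id}"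
    then show ?thesis using Aut.finitely_generated_trivial by simp
  next
    assume "finite_index C G"
    then show ?thesis
      using Aut.finitely_generated_finite_index_subgroup[OF C G C_G fg] finite_index_iff by blast
  qed
  then show "finitely_generated autgroup (psi x (trivial_sections E W))" unfolding C_def .
qed

lemma finitely_generated_if_normalized_by_finite_index:
  fixes G C H :: "('a::finite list \<Rightarrow> 'a list) set"
  assumes G: "subgroup G autgroup" and fg: "finitely_generated autgroup G"
    and ji: "just_infinite G" and ssr: "strongly_self_replicating G"
    and csp: "congruence_subgroup_property G"
    and C: "subgroup C autgroup" "C \<subseteq> G"
    and H: "subgroup H (grp G)" "finite_index H G" and normal: "normalizes H C"
  shows "finitely_generated autgroup C"
proof -
  obtain n where "stab_level G n \<subseteq> H" using csp H unfolding congruence_subgroup_property_def by blast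
  \<comment> \<open>Pass to level Suc n, since strong self-replication says nothing about level 0.\<close>
  define St where "St = stab_level G (Suc n)"
  have St_H: "St \<subseteq> H" unfolding St_def using stab_level_Suc_subset[OF G] \<open>stab_level G n \<subseteq> H\<close> by blast
  have St: "subgroup St autgroup" unfolding St_def stab_level_def by (rule stab_set_subgroup[OF G])
  have St_C: "subgroup (St \<inter> C) autgroup" using Aut.subgroups_Inter_pair[OF St C(1)] .
  have "s \<circ> c \<circ> aut_inv s \<in> St \<inter> C" if s: "s \<in> St" and c: "c \<in> St \<inter> C" for s c
  proof
    show "s \<circ> c \<circ> aut_inv s \<in> C" using normal St_H s c unfolding normalizes_def by blast
    show "s \<circ> c \<circ> aut_inv s \<in> St"
      using subgroup.m_closed[OF St subgroup.m_closed[OF St s, of c] subgroup.m_inv_closed[OF St s]] c by simp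
  qed
  then have "normalizes (stab_level G (Suc n)) (St \<inter> C)" unfolding normalizes_def St_def by blast
  then have fg_St_C: "finitely_generated autgroup (St \<inter> C)"
    using finitely_generated_if_normalized_by_level_stabilizer[where m = "Suc n", OF G fg ji ssr _ St_C]
    unfolding St_def by simp
  have "finite ((\<lambda>b. St #>\<^bsub>autgroup\<^esub> b) ` G)"
    unfolding St_def stab_level_def by (rule finite_index_stab_set[OF G finite_level])
  then have "finite ((\<lambda>c. (St \<inter> C) #>\<^bsub>autgroup\<^esub> c) ` C)"
    by (rule Aut.finite_index_Int_subgroup[OF St C(1) C(2)])
  then show ?thesis
    by (rule Aut.finitely_generated_of_finite_index[OF St_C C(1) Int_lower2 fg_St_C])
qed

theorem lemma3p5:
  fixes G L :: "('a::finite list \<Rightarrow> 'a list) set"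
    and Y :: "'a list set"
  assumes "subgroup G autgroup"
    and "fin_gen G"
    and "just_infinite G"
    and "strongly_self_replicating G"
    and "congruence_subgroup_property G"
    and "leaf_set Y" and "spanning Y"
    and "subgroup L (grp G)"
    and "infra_direct G L Y"
  shows "fin_gen L"
proof -
  have fg: "finitely_generated autgroup G" using assms(2) unfolding fin_gen_def finitely_generated_def .
  have L: "subgroup L autgroup" "L \<subseteq> G" using subgroup_grp_iff[OF assms(1)] assms(8) by blast+
  have Y: "finite Y" using assms(6) unfolding leaf_set_def by blast
  define K where "K = stab_set L Y"
  have K: "subgroup K autgroup" unfolding K_def by (rule stab_set_subgroup[OF L(1)])
  have K_L: "K \<subseteq> L" unfolding K_def stab_set_def by blast
  have fixed: "\<And>e y. e \<in> K \<Longrightarrow> y \<in> Y \<Longrightarrow> e y = y" unfolding K_def stab_set_def by blast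
  have "finitely_generated autgroup K"
  proof (rule finitely_generated_by_sections[OF K Y assms(7)])
    show "\<And>e v. e \<in> K \<Longrightarrow> v \<in> Y \<Longrightarrow> e v = v" by (fact fixed)
  next
    fix W y assume W: "W \<subseteq> Y" and y: "y \<in> Y"
    have H: "subgroup (psi y K) (grp G)" "finite_index (psi y K) G"
      using assms(9) y unfolding infra_direct_def K_def by auto
    have fixed_Wy: "\<And>e v. e \<in> K \<union> K \<Longrightarrow> v \<in> insert y W \<Longrightarrow> e v = v" using fixed W y by blast
    have normal: "normalizes (psi y K) (psi y (trivial_sections K W))"
      using subgroup.subset[OF K] subgroup.subset[OF K] fixed_Wy subgroup_normalizes_self[OF K]
      by (rule normalizes_psi_trivial_sections)
    have C: "subgroup (psi y (trivial_sections K W)) autgroup"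
      by (rule psi_trivial_sections_subgroup[OF K]) (use fixed_Wy in blast)
    have "trivial_sections K W \<subseteq> G" using L(2) unfolding K_def stab_set_def trivial_sections_def by blast
    then have C_G: "psi y (trivial_sections K W) \<subseteq> G" by (rule psi_subset_self_replicating[OF assms(4)])
    show "finitely_generated autgroup (psi y (trivial_sections K W))"
      by (rule finitely_generated_if_normalized_by_finite_index[OF assms(1) fg assms(3-5) C C_G H normal])
  qed
  moreover have "finite ((\<lambda>b. K #>\<^bsub>autgroup\<^esub> b) ` L)"
    unfolding K_def by (rule finite_index_stab_set[OF L(1) Y])
  ultimately have "finitely_generated autgroup L"
    by (rule Aut.finitely_generated_of_finite_index[OF K L(1) K_L])
  then show ?thesis unfolding fin_gen_def finitely_generated_def .
qed

end
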